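(* Let $TT_n$ be the transitive tournament on $n$ vertices and let $(\alpha_1,\alpha_2)\in\mathbb{Z}^2$ with $\alpha_1\alpha_2<0$, $|\alpha_1|\neq|\alpha_2|$ and $|\alpha_1|+|\alpha_2|=n-1$. Then the number of oriented paths of type $P(\alpha_1,\alpha_2)$ in $TT_n$ is $\binom{n-1}{|\alpha_1|}$.
   Context: The transitive tournament $TT_n$ has vertices $v_1,\dots,v_n$ and arcs $(v_i,v_j)$ for all $i<j$. An oriented path is a digraph whose underlying graph is a path; a block is a maximal directed subpath. An oriented path $P$ is of type $P(\alpha_1,\alpha_2)$ if $P$ is the concatenation of two blocks $I_1,I_2$, where $I_i$ has ends $x_i,y_i$, $I_1\cap I_2=\{y_1\}=\{x_2\}$, $I_i$ has length $|\alpha_i|$, and $\alpha_i>0$ iff $I_i$ is directed from $x_i$ to $y_i$. Paths are counted as distinct when their arc sets differ. *)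

theory Defs
  imports Main
begin

definition TT_arcs :: "nat \<Rightarrow> (nat \<times> nat) set" where
  "TT_arcs n = {(i, j). 1 \<le> i \<and> i < j \<and> j \<le> n}"

text \<open>An oriented path in TT_n is given by its vertex sequence xs (distinct vertices of TT_n);
  its arc set consists of the arcs of TT_n between consecutive vertices.\<close>
definition path_arcs :: "nat list \<Rightarrow> (nat \<times> nat) set" where
  "path_arcs xs = {(min (xs ! k) (xs ! Suc k), max (xs ! k) (xs ! Suc k)) | k. Suc k < length xs}"

definition step_ok :: "int \<Rightarrow> nat \<Rightarrow> nat \<Rightarrow> bool" where
  "step_ok a u w \<longleftrightarrow> (a > 0 \<and> u < w) \<or> (a < 0 \<and> w < u)"

text \<open>xs traverses a path of type P(a1,a2) in TT_n: first block x_1 = xs!0 .. y_1 = xs!|a1|,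
  second block x_2 = y_1 .. y_2 = last xs, of lengths |a1|, |a2|, with directions given by
  the signs of a1, a2.  Blocks are maximal iff the signs differ (a1 * a2 < 0).\<close>
definition type_P_seq :: "nat \<Rightarrow> int \<Rightarrow> int \<Rightarrow> nat list \<Rightarrow> bool" where
  "type_P_seq n a1 a2 xs \<longleftrightarrow>
     a1 * a2 < 0 \<and>
     length xs = nat \<bar>a1\<bar> + nat \<bar>a2\<bar> + 1 \<and> distinct xs \<and> set xs \<subseteq> {1..n} \<and>
     (\<forall>k < nat \<bar>a1\<bar>. step_ok a1 (xs ! k) (xs ! Suc k)) \<and>
     (\<forall>k. nat \<bar>a1\<bar> \<le> k \<and> k < nat \<bar>a1\<bar> + nat \<bar>a2\<bar> \<longrightarrow> step_ok a2 (xs ! k) (xs ! Suc k))"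

text \<open>Paths of type P(a1,a2) in TT_n, counted by their arc sets.\<close>
definition type_P_paths :: "nat \<Rightarrow> int \<Rightarrow> int \<Rightarrow> (nat \<times> nat) set set" where
  "type_P_paths n a1 a2 = {path_arcs xs | xs. type_P_seq n a1 a2 xs}"

end

theory Submission
  imports Defs
begin

(* Renumbering the vertices by i -> n + 1 - i reverses every arc and turns paths of type
  P(a1, a2) into paths of type P(-a1, -a2), so we may assume a1 = p > 0 > a2 = -q.
  Such a path has p + q + 1 = n vertices, so it visits every vertex; it rises for p steps and
  then falls, so it turns at v_n and is determined by the set S of the p vertices before the
  peak, an arbitrary p-subset of {1..n-1}.  Different sets S give different arc sets: for
  i + 1 < n the arc v_i v_(i+1) lies on the path iff i and i + 1 lie on the same side of the
  peak, so the arc set determines S up to complement, and the complement has q \<noteq> p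
  elements. *)

lemma path_arcs_subset: "path_arcs xs \<subseteq> set xs \<times> set xs"
  unfolding path_arcs_def by (auto simp: min_def max_def)

lemma path_arcs_rev_subset: "path_arcs (rev xs) \<subseteq> path_arcs xs"
  unfolding path_arcs_def
proof clarify
  fix k assume "Suc k < length (rev xs)"
  then show "\<exists>j. (min (rev xs ! k) (rev xs ! Suc k), max (rev xs ! k) (rev xs ! Suc k)) =
      (min (xs ! j) (xs ! Suc j), max (xs ! j) (xs ! Suc j)) \<and> Suc j < length xs"
    by (intro exI[of _ "length xs - Suc (Suc k)"])
      (simp add: rev_nth Suc_diff_Suc min.commute max.commute)
qed

lemma path_arcs_rev: "path_arcs (rev xs) = path_arcs xs"
  using path_arcs_rev_subset[of xs] path_arcs_rev_subset[of "rev xs"] by simp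

lemma path_arcs_append_subset: "path_arcs xs \<union> path_arcs ys \<subseteq> path_arcs (xs @ ys)"
proof -
  have "path_arcs xs \<subseteq> path_arcs (xs @ ys)"
    unfolding path_arcs_def by (force simp: nth_append)
  moreover have "path_arcs ys \<subseteq> path_arcs (xs @ ys)"
    unfolding path_arcs_def
  proof clarify
    fix k assume "Suc k < length ys"
    then show "\<exists>j. (min (ys ! k) (ys ! Suc k), max (ys ! k) (ys ! Suc k)) =
        (min ((xs @ ys) ! j) ((xs @ ys) ! Suc j), max ((xs @ ys) ! j) ((xs @ ys) ! Suc j)) \<and>
        Suc j < length (xs @ ys)"
      by (intro exI[of _ "length xs + k"]) (simp add: nth_append)
  qed
  ultimately show ?thesis by blast
qed

lemma path_arcs_append_Cons_avoiding:
  assumes "(u, v) \<in> path_arcs (xs @ m # ys)" "u \<noteq> m" "v \<noteq> m"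
  shows "(u, v) \<in> path_arcs xs \<union> path_arcs ys"
proof -
  let ?zs = "xs @ m # ys"
  obtain k where k: "Suc k < length ?zs"
      "u = min (?zs ! k) (?zs ! Suc k)" "v = max (?zs ! k) (?zs ! Suc k)"
    using assms(1) unfolding path_arcs_def by auto
  have "?zs ! k \<noteq> m" "?zs ! Suc k \<noteq> m"
    using k assms(2,3) by (auto simp: min_def max_def split: if_splits)
  then have "k \<noteq> length xs" "Suc k \<noteq> length xs"
    by auto
  then consider "Suc k < length xs" | "length xs < k"
    by linarith
  then show ?thesis
  proof cases
    case 1
    then show ?thesis using k unfolding path_arcs_def by (auto simp: nth_append)
  next
    case 2
    then obtain j where "k = Suc (length xs + j)" using less_imp_Suc_add by blast
    then show ?thesis using k unfolding path_arcs_def by (auto simp: nth_append)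
  qed
qed

lemma Suc_in_path_arcs_if_sorted:
  assumes "sorted_wrt (<) xs" "x \<in> set xs" "Suc x \<in> set xs"
  shows "(x, Suc x) \<in> path_arcs xs"
proof -
  obtain i j where ij: "i < length xs" "xs ! i = x" "j < length xs" "xs ! j = Suc x"
    using assms(2,3) by (metis in_set_conv_nth)
  have "i < j"
    using ij sorted_wrt_nth_less[OF assms(1), of j i] by (metis lessI less_asym nat_neq_iff)
  moreover have "\<not> Suc i < j"
    using ij sorted_wrt_nth_less[OF assms(1), of i "Suc i"]
      sorted_wrt_nth_less[OF assms(1), of "Suc i" j]
    by auto
  ultimately have "j = Suc i" by simp
  then show ?thesis using ij unfolding path_arcs_def by force
qed

lemma path_arcs_map_antimono:
  assumes "antimono f"
  shows "path_arcs (map f xs) = (\<lambda>(u, v). (f v, f u)) ` path_arcs xs"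
proof -
  have minmax: "min (f a) (f b) = f (max a b)" "max (f a) (f b) = f (min a b)" for a b
    using antimonoD[OF assms, of a b] antimonoD[OF assms, of b a]
    by (cases "a \<le> b"; simp add: min_def max_def)+
  have "path_arcs (map f xs) =
      {(f (max (xs ! k) (xs ! Suc k)), f (min (xs ! k) (xs ! Suc k))) | k. Suc k < length xs}"
    unfolding path_arcs_def by (force simp: minmax)
  also have "\<dots> = (\<lambda>(u, v). (f v, f u)) ` path_arcs xs"
    unfolding path_arcs_def image_Collect by auto
  finally show ?thesis .
qed

lemma steps_iff_sorted_take_drop:
  fixes xs :: "'a::linorder list"
  assumes "length xs = p + q + 1"
  shows "(\<forall>k<p. xs ! k < xs ! Suc k) \<and> (\<forall>k. p \<le> k \<and> k < p + q \<longrightarrow> xs ! Suc k < xs ! k)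
    \<longleftrightarrow> sorted_wrt (<) (take (Suc p) xs) \<and> sorted_wrt (>) (drop p xs)"
proof -
  have "(\<forall>k. p \<le> k \<and> k < p + q \<longrightarrow> xs ! Suc k < xs ! k) \<longleftrightarrow>
      (\<forall>i<q. xs ! Suc (p + i) < xs ! (p + i))"
    by (auto dest: le_Suc_ex)
  then show ?thesis
    using assms by (simp add: sorted_wrt_iff_nth_Suc_transp)
qed

lemma iff_first_if_iff_Suc:
  assumes "\<And>x. a \<le> x \<Longrightarrow> Suc x < b \<Longrightarrow> P x \<longleftrightarrow> P (Suc x)" "a \<le> y" "y < b"
  shows "P y \<longleftrightarrow> P a"
  using assms(2,3)
proof (induction y rule: dec_induct)
  case (step y)
  then show ?case using assms(1) by simp
qed simp

lemma step_ok_reflect: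
  assumes "u \<le> n" "w \<le> n"
  shows "step_ok (- a) (Suc n - u) (Suc n - w) \<longleftrightarrow> step_ok a u w"
  using assms unfolding step_ok_def by auto

lemma type_P_seq_reflect:
  assumes "type_P_seq n a1 a2 xs"
  shows "type_P_seq n (- a1) (- a2) (map (\<lambda>x. Suc n - x) xs)"
proof -
  have range: "\<forall>x\<in>set xs. 1 \<le> x \<and> x \<le> n"
    and len: "length xs = nat \<bar>a1\<bar> + nat \<bar>a2\<bar> + 1"
    using assms unfolding type_P_seq_def by auto
  then have bound: "xs ! k \<le> n" if "k < length xs" for k
    using that nth_mem by blast
  have "inj_on (\<lambda>x. Suc n - x) (set xs)"
    using range by (intro inj_onI) fastforce
  moreover have "(\<lambda>x. Suc n - x) ` set xs \<subseteq> {1..n}"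
    using range by fastforce
  ultimately show ?thesis
    using assms len step_ok_reflect[OF bound bound]
    unfolding type_P_seq_def by (simp add: distinct_map mult.commute)
qed

lemma type_P_paths_subset_Pow: "type_P_paths n a1 a2 \<subseteq> Pow ({1..n} \<times> {1..n})"
  using path_arcs_subset unfolding type_P_paths_def type_P_seq_def by fastforce

lemma card_type_P_paths_le_reflect:
  "card (type_P_paths n a1 a2) \<le> card (type_P_paths n (- a1) (- a2))"
proof (rule card_inj_on_le)
  let ?flip = "\<lambda>(u, v). (Suc n - v, Suc n - u)"
  have "inj_on ?flip ({1..n} \<times> {1..n})"
    by (rule inj_onI) (clarsimp, linarith)
  then show "inj_on (image ?flip) (type_P_paths n a1 a2)"
    by (rule inj_on_subset[OF inj_on_image_Pow type_P_paths_subset_Pow])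
  have "antimono (\<lambda>x. Suc n - x)"
    by (rule antimonoI) simp
  show "image ?flip ` type_P_paths n a1 a2 \<subseteq> type_P_paths n (- a1) (- a2)"
  proof (rule image_subsetI)
    fix A assume "A \<in> type_P_paths n a1 a2"
    then obtain xs where xs: "A = path_arcs xs" "type_P_seq n a1 a2 xs"
      unfolding type_P_paths_def by blast
    then have "?flip ` A = path_arcs (map (\<lambda>x. Suc n - x) xs)"
      using path_arcs_map_antimono[OF \<open>antimono (\<lambda>x. Suc n - x)\<close>] by simp
    then show "?flip ` A \<in> type_P_paths n (- a1) (- a2)"
      using type_P_seq_reflect[OF xs(2)] unfolding type_P_paths_def by blast
  qed
  show "finite (type_P_paths n (- a1) (- a2))"
    by (rule finite_subset[OF type_P_paths_subset_Pow]) simp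
qed

lemma card_type_P_paths_reflect:
  "card (type_P_paths n (- a1) (- a2)) = card (type_P_paths n a1 a2)"
  using card_type_P_paths_le_reflect[of n a1 a2] card_type_P_paths_le_reflect[of n "- a1" "- a2"]
  by simp

lemma type_P_seq_pos_neg_iff:
  "type_P_seq n (int p) (- int q) xs \<longleftrightarrow>
     0 < p \<and> 0 < q \<and> length xs = p + q + 1 \<and> distinct xs \<and> set xs \<subseteq> {1..n} \<and>
     sorted_wrt (<) (take (Suc p) xs) \<and> sorted_wrt (>) (drop p xs)"
proof -
  have "type_P_seq n (int p) (- int q) xs \<longleftrightarrow>
     0 < p \<and> 0 < q \<and> length xs = p + q + 1 \<and> distinct xs \<and> set xs \<subseteq> {1..n} \<and>
     (\<forall>k<p. xs ! k < xs ! Suc k) \<and> (\<forall>k. p \<le> k \<and> k < p + q \<longrightarrow> xs ! Suc k < xs ! k)"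
    unfolding type_P_seq_def step_ok_def by (auto simp: zero_less_mult_iff)
  then show ?thesis
    using steps_iff_sorted_take_drop by blast
qed

definition up_down_list :: "nat \<Rightarrow> nat set \<Rightarrow> nat list" where
  "up_down_list n S = sorted_list_of_set S @ n # rev (sorted_list_of_set ({1..<n} - S))"

lemma type_P_seq_up_down_list:
  assumes S: "S \<subseteq> {1..<n}" "card S = p" and n: "n = p + q + 1" and pq: "0 < p" "0 < q"
  shows "type_P_seq n (int p) (- int q) (up_down_list n S)"
proof -
  define T where "T = {1..<n} - S"
  have fin: "finite S" "finite T"
    using S(1) finite_subset unfolding T_def by auto
  have "card T = q"
    using S n fin(1) unfolding T_def by (simp add: card_Diff_subset)
  moreover have "sorted_wrt (<) (sorted_list_of_set S @ [n])"
    using S(1) fin(1) by (auto simp: sorted_wrt_append)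
  moreover have "sorted_wrt (>) (n # rev (sorted_list_of_set T))"
    using fin(2) unfolding T_def by (auto simp: sorted_wrt_rev)
  moreover have "S \<union> insert n T = {1..n}" "S \<inter> T = {}" "n \<notin> S \<union> T"
    using S(1) n unfolding T_def by auto
  ultimately show ?thesis
    unfolding type_P_seq_pos_neg_iff up_down_list_def T_def[symmetric]
    using S n pq fin by auto
qed

lemma unimodal_eq_up_down_list:
  assumes dist: "distinct xs" and set: "set xs = {1..n}" and p: "p < length xs"
    and up: "sorted_wrt (<) (take (Suc p) xs)" and down: "sorted_wrt (>) (drop p xs)"
  shows "set (take p xs) \<subseteq> {1..<n}" "xs = up_down_list n (set (take p xs))"
proof -
  define L m R where "L = take p xs" and "m = xs ! p" and "R = drop (Suc p) xs"
  have xs: "xs = L @ m # R"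
    using p unfolding L_def m_def R_def by (simp add: id_take_nth_drop)
  have "take (Suc p) xs = L @ [m]" "drop p xs = m # R"
    using p unfolding L_def m_def R_def by (simp_all add: take_Suc_conv_app_nth Cons_nth_drop_Suc)
  then have L: "sorted_wrt (<) L" "\<forall>x\<in>set L. x < m"
    and R: "sorted_wrt (<) (rev R)" "\<forall>x\<in>set R. x < m"
    using up down by (simp_all add: sorted_wrt_append sorted_wrt_rev)
  have set_LmR: "insert m (set L \<union> set R) = {1..n}" and dist_LmR: "distinct (L @ m # R)"
    using set dist unfolding xs by auto
  then have "n \<in> insert m (set L \<union> set R)" "m \<le> n"
    using p xs by auto
  then have peak: "m = n"
    using L(2) R(2) by fastforce
  have "{1..<n} = {1..n} - {n}"
    by auto
  then have LR: "set L \<union> set R = {1..<n}" "set L \<inter> set R = {}"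
    using set_LmR dist_LmR peak by auto
  have "sorted_list_of_set (set L) = L" "sorted_list_of_set (set (rev R)) = rev R"
    using L(1) R(1) by (simp_all add: strict_sorted_equal)
  moreover have "set (rev R) = {1..<n} - set L"
    using LR by auto
  ultimately show "xs = up_down_list n (set (take p xs))"
    unfolding up_down_list_def L_def[symmetric] using xs peak by simp
  show "set (take p xs) \<subseteq> {1..<n}"
    using LR unfolding L_def by blast
qed

lemma type_P_seq_pos_neg_eq_image:
  assumes n: "n = p + q + 1" and pq: "0 < p" "0 < q"
  shows "{xs. type_P_seq n (int p) (- int q) xs} =
    up_down_list n ` {S. S \<subseteq> {1..<n} \<and> card S = p}"
proof (intro antisym subsetI)
  fix xs assume "xs \<in> {xs. type_P_seq n (int p) (- int q) xs}"
  then have xs: "length xs = n" "distinct xs" "set xs \<subseteq> {1..n}"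
    and up: "sorted_wrt (<) (take (Suc p) xs)" and down: "sorted_wrt (>) (drop p xs)"
    using n by (simp_all add: type_P_seq_pos_neg_iff)
  then have "set xs = {1..n}"
    by (simp add: card_subset_eq distinct_card)
  then have "set (take p xs) \<subseteq> {1..<n}" "xs = up_down_list n (set (take p xs))"
    using unimodal_eq_up_down_list[OF xs(2) _ _ up down] xs(1) n by auto
  moreover have "card (set (take p xs)) = p"
    using xs(1,2) n by (simp add: distinct_card)
  ultimately show "xs \<in> up_down_list n ` {S. S \<subseteq> {1..<n} \<and> card S = p}"
    by blast
next
  fix xs assume "xs \<in> up_down_list n ` {S. S \<subseteq> {1..<n} \<and> card S = p}"
  then show "xs \<in> {xs. type_P_seq n (int p) (- int q) xs}"
    using type_P_seq_up_down_list n pq by blast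
qed

lemma Suc_in_path_arcs_up_down_list_iff:
  assumes S: "S \<subseteq> {1..<n}" and x: "1 \<le> x" "Suc x < n"
  shows "(x, Suc x) \<in> path_arcs (up_down_list n S) \<longleftrightarrow> (x \<in> S \<longleftrightarrow> Suc x \<in> S)"
proof -
  define L R where "L = sorted_list_of_set S" and "R = rev (sorted_list_of_set ({1..<n} - S))"
  have fin: "finite S"
    using S finite_subset by blast
  have set_L: "set L = S" and set_R: "set R = {1..<n} - S"
    unfolding L_def R_def using fin by simp_all
  have arcs: "path_arcs L \<union> path_arcs R \<subseteq> path_arcs (up_down_list n S)"
    using path_arcs_append_subset[of L "n # R"] path_arcs_append_subset[of "[n]" R]
    unfolding up_down_list_def L_def[symmetric] R_def[symmetric] by auto
  show ?thesis
  proof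
    assume "(x, Suc x) \<in> path_arcs (up_down_list n S)"
    then have "(x, Suc x) \<in> path_arcs L \<union> path_arcs R"
      using path_arcs_append_Cons_avoiding x(2)
      unfolding up_down_list_def L_def[symmetric] R_def[symmetric] by simp
    then show "x \<in> S \<longleftrightarrow> Suc x \<in> S"
      using path_arcs_subset set_L set_R by blast
  next
    assume same_side: "x \<in> S \<longleftrightarrow> Suc x \<in> S"
    show "(x, Suc x) \<in> path_arcs (up_down_list n S)"
    proof (cases "x \<in> S")
      case True
      then have "(x, Suc x) \<in> path_arcs L"
        using same_side set_L fin by (intro Suc_in_path_arcs_if_sorted) (simp_all add: L_def)
      then show ?thesis using arcs by blast
    next
      case False
      then have "(x, Suc x) \<in> path_arcs (rev R)"
        using same_side set_R x by (intro Suc_in_path_arcs_if_sorted) (simp_all add: R_def)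
      then show ?thesis using arcs path_arcs_rev by blast
    qed
  qed
qed

lemma inj_on_path_arcs_up_down_list:
  assumes n: "n = p + q + 1" and "p \<noteq> q"
  shows "inj_on (\<lambda>S. path_arcs (up_down_list n S)) {S. S \<subseteq> {1..<n} \<and> card S = p}"
proof (rule inj_onI)
  fix S S'
  assume "S \<in> {S. S \<subseteq> {1..<n} \<and> card S = p}"
    and "S' \<in> {S. S \<subseteq> {1..<n} \<and> card S = p}"
  then have S: "S \<subseteq> {1..<n}" "card S = p" and S': "S' \<subseteq> {1..<n}" "card S' = p"
    by auto
  assume "path_arcs (up_down_list n S) = path_arcs (up_down_list n S')"
  then have "(x \<in> S \<longleftrightarrow> x \<in> S') \<longleftrightarrow> (Suc x \<in> S \<longleftrightarrow> Suc x \<in> S')"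
    if "1 \<le> x" "Suc x < n" for x
    using Suc_in_path_arcs_up_down_list_iff[OF S(1) that]
      Suc_in_path_arcs_up_down_list_iff[OF S'(1) that]
    by blast
  then have agree: "(y \<in> S \<longleftrightarrow> y \<in> S') \<longleftrightarrow> (1 \<in> S \<longleftrightarrow> 1 \<in> S')" if "y \<in> {1..<n}" for y
    using iff_first_if_iff_Suc[of 1 n "\<lambda>y. y \<in> S \<longleftrightarrow> y \<in> S'" y] that by auto
  show "S = S'"
  proof (cases "1 \<in> S \<longleftrightarrow> 1 \<in> S'")
    case True
    then show ?thesis using agree S(1) S'(1) by blast
  next
    case False
    then have "S' = {1..<n} - S"
      using agree S(1) S'(1) by blast
    then have "card S' = q"
      using S n by (simp add: card_Diff_subset finite_subset)
    then show ?thesis using S' \<open>p \<noteq> q\<close> by simp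
  qed
qed

lemma card_type_P_paths_pos_neg:
  assumes n: "n = p + q + 1" and pq: "0 < p" "0 < q" "p \<noteq> q"
  shows "card (type_P_paths n (int p) (- int q)) = (n - 1) choose p"
proof -
  let ?subsets = "{S. S \<subseteq> {1..<n} \<and> card S = p}"
  have "type_P_paths n (int p) (- int q) = path_arcs ` {xs. type_P_seq n (int p) (- int q) xs}"
    unfolding type_P_paths_def by blast
  also have "\<dots> = (\<lambda>S. path_arcs (up_down_list n S)) ` ?subsets"
    unfolding type_P_seq_pos_neg_eq_image[OF n pq(1,2)] image_image ..
  finally have "card (type_P_paths n (int p) (- int q)) = card ?subsets"
    using card_image[OF inj_on_path_arcs_up_down_list[OF n pq(3)]] by simp
  then show ?thesis
    using n_subsets[of "{1..<n}" p] by simp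
qed

theorem proposition2:
  fixes n :: nat and a1 a2 :: int
  assumes "a1 * a2 < 0"
    and "\<bar>a1\<bar> \<noteq> \<bar>a2\<bar>"
    and "\<bar>a1\<bar> + \<bar>a2\<bar> = int n - 1"
  shows "card (type_P_paths n a1 a2) = (n - 1) choose (nat \<bar>a1\<bar>)"
proof -
  define p q where "p = nat \<bar>a1\<bar>" and "q = nat \<bar>a2\<bar>"
  have pq: "0 < p" "0 < q" "p \<noteq> q" and n: "n = p + q + 1"
    using assms unfolding p_def q_def by (auto simp: mult_less_0_iff)
  have "(a1, a2) = (int p, - int q) \<or> (a1, a2) = (- int p, int q)"
    using assms(1) unfolding p_def q_def by (auto simp: mult_less_0_iff)
  then have "card (type_P_paths n a1 a2) = card (type_P_paths n (int p) (- int q))"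
    using card_type_P_paths_reflect[of n "int p" "- int q"] by auto
  also have "\<dots> = (n - 1) choose p"
    using card_type_P_paths_pos_neg[OF n pq] .
  finally show ?thesis
    unfolding p_def .
qed

end
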